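(* Let $r_A,r_B>0$ satisfy $r_A+r_B\le CK_z\rho|\Lambda|$. Then, for $\rho\bar a^3$ small enough, the functional $$F(r_A,r_B)=\frac{8\pi\bar a}{|\Lambda|}(\rho\bar a^3)^{1/4}(r_A^2+r_B^2)+|\Lambda|^{-3/2}G(r_A,r_B)^{5/4}I(r_A,r_B)-\mu_Ar_A-\mu_Br_B$$ is convex in $(r_A,r_B)$.
   Context: $a_A,a_B,a_{AB}>0$ with $a_{AB}^2\le a_Aa_B$, $\bar a=\max\{a_A,a_B,a_{AB}\}$; $\rho>0$, $|\Lambda|>0$ a volume, $\mu_A,\mu_B\in\mathbb R$, $C>0$ a constant, $K_z=(\rho\bar a^3)^{-\nu}$ with $\nu\in(0,\frac1{10000}]$. $G(r_A,r_B)=r_A^2a_A^2+2r_Ar_Ba_{AB}^2+r_B^2a_B^2$; $I(r_A,r_B)=(8\pi)^{5/2}\frac{2\sqrt2}{15\pi^2}(\mu_+^{5/2}+\mu_-^{5/2})$ with $\mu_\pm=\sqrt{1+\xi_{AB}}\pm\sqrt{1-\xi_{AB}}$ and $\xi_{AB}=\frac{2r_Ar_B(a_Aa_B-a_{AB}^2)}{r_A^2a_A^2+2r_Ar_Ba_{AB}^2+r_B^2a_B^2}$. *)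

theory Defs
  imports "HOL-Analysis.Analysis"
begin

definition abar :: "real \<Rightarrow> real \<Rightarrow> real \<Rightarrow> real" where
  "abar aA aB aAB = max aA (max aB aAB)"

definition Kz :: "real \<Rightarrow> real \<Rightarrow> real \<Rightarrow> real \<Rightarrow> real \<Rightarrow> real" where
  "Kz \<nu> \<rho> aA aB aAB = (\<rho> * abar aA aB aAB ^ 3) powr (- \<nu>)"

definition Gf :: "real \<Rightarrow> real \<Rightarrow> real \<Rightarrow> real \<Rightarrow> real \<Rightarrow> real" where
  "Gf aA aB aAB rA rB = rA^2 * aA^2 + 2 * rA * rB * aAB^2 + rB^2 * aB^2"

definition xiAB :: "real \<Rightarrow> real \<Rightarrow> real \<Rightarrow> real \<Rightarrow> real \<Rightarrow> real" where
  "xiAB aA aB aAB rA rB =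
     2 * rA * rB * (aA * aB - aAB^2) / (rA^2 * aA^2 + 2 * rA * rB * aAB^2 + rB^2 * aB^2)"

definition mu_plus :: "real \<Rightarrow> real" where
  "mu_plus \<xi> = sqrt (1 + \<xi>) + sqrt (1 - \<xi>)"

definition mu_minus :: "real \<Rightarrow> real" where
  "mu_minus \<xi> = sqrt (1 + \<xi>) - sqrt (1 - \<xi>)"

definition If :: "real \<Rightarrow> real \<Rightarrow> real \<Rightarrow> real \<Rightarrow> real \<Rightarrow> real" where
  "If aA aB aAB rA rB =
     (let \<xi> = xiAB aA aB aAB rA rB in
      (8 * pi) powr (5/2) * (2 * sqrt 2 / (15 * pi^2)) *
        (mu_plus \<xi> powr (5/2) + mu_minus \<xi> powr (5/2)))"

text \<open>The functional F; L stands for the volume |Lambda|.\<close>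
definition Ff :: "real \<Rightarrow> real \<Rightarrow> real \<Rightarrow> real \<Rightarrow> real \<Rightarrow> real \<Rightarrow> real \<Rightarrow> real \<Rightarrow> real \<Rightarrow> real" where
  "Ff aA aB aAB \<rho> L \<mu>A \<mu>B rA rB =
     8 * pi * abar aA aB aAB / L * (\<rho> * abar aA aB aAB ^ 3) powr (1/4) * (rA^2 + rB^2)
     + L powr (-3/2) * Gf aA aB aAB rA rB powr (5/4) * If aA aB aAB rA rB
     - \<mu>A * rA - \<mu>B * rB"

end

theory Submission
  imports Defs
begin

text \<open>With \<open>T = aA rA + aB rB\<close> and \<open>s = sqrt (T\<^sup>2 - 4 (aA aB - aAB\<^sup>2) rA rB)\<close>, the numbers
  \<open>(T + s)/2\<close> and \<open>(T - s)/2\<close> are the eigenvalues of the symmetric matrix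
  \<open>[[aA rA, aAB sqrt (rA rB)], [aAB sqrt (rA rB), aB rB]]\<close>, whose square has trace \<open>Gf\<close>; accordingly
  \<open>mu_plus\<close> and \<open>mu_minus\<close> of \<open>xiAB\<close> equal \<open>(T + s)/sqrt Gf\<close> and \<open>(T - s)/sqrt Gf\<close>, and
  \<open>Gf powr (5/4) * If\<close> is a constant multiple of \<open>(T + s) powr (5/2) + (T - s) powr (5/2)\<close>.
  Here \<open>T\<close> is linear in \<open>(rA, rB)\<close>, while a Cholesky factorisation of the quadratic form under
  the root exhibits \<open>s\<close> as the Euclidean norm of a linear image of \<open>(rA, rB)\<close>; so \<open>s\<close> is convex
  and \<open>0 \<le> s \<le> T\<close>. As \<open>x powr (5/2)\<close> is convex on \<open>[0, \<infinity>)\<close>, the function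
  \<open>(T, s) \<mapsto> (T + s) powr (5/2) + (T - s) powr (5/2)\<close> is convex and nondecreasing in \<open>s \<ge> 0\<close>,
  and the composition is convex. The other terms of \<open>Ff\<close> are a nonnegative multiple of
  \<open>rA\<^sup>2 + rB\<^sup>2\<close> and linear.\<close>

lemma convex_on_powr_nonneg:
  fixes p :: real
  assumes "p \<ge> 1"
  shows "convex_on {0..} (\<lambda>x::real. x powr p)"
proof (rule convex_onI)
  have shrink: "(u * z) powr p \<le> u * z powr p" if "0 \<le> u" "u \<le> 1" "0 \<le> z" for u z :: real
  proof -
    have "u powr p \<le> u powr 1"
      using that assms by (intro powr_mono') auto
    then have "u powr p * z powr p \<le> u * z powr p"
      using that by (cases "u = 0") (auto intro: mult_right_mono)
    then show ?thesis
      using that by (simp add: powr_mult)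
  qed
  fix t x y :: real
  assume t: "0 < t" "t < 1" and xy: "x \<in> {0..}" "y \<in> {0..}"
  consider "x > 0" "y > 0" | "x = 0" | "y = 0"
    using xy by fastforce
  then show "((1 - t) *\<^sub>R x + t *\<^sub>R y) powr p \<le> (1 - t) * x powr p + t * y powr p"
  proof cases
    case 1
    then show ?thesis
      using convex_onD[OF powr_convex[OF assms], of t x y] t by simp
  next
    case 2
    then show ?thesis
      using shrink[of t y] t xy by simp
  next
    case 3
    then show ?thesis
      using shrink[of "1 - t" x] t xy by simp
  qed
qed simp

lemma convex_on_reflect_sum_mono:
  fixes f :: "real \<Rightarrow> real"
  assumes f: "convex_on I f" and I: "T - S \<in> I" "T + S \<in> I" and s: "0 \<le> s" "s \<le> S"
  shows "f (T + s) + f (T - s) \<le> f (T + S) + f (T - S)"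
proof (cases "S = 0")
  case True
  with s show ?thesis by simp
next
  case False
  with s have "S > 0" by simp
  define u where "u = (S + s) / (2 * S)"
  have u: "0 \<le> u" "u \<le> 1"
    using s \<open>S > 0\<close> by (auto simp: u_def field_simps)
  have "T + s = (1 - u) *\<^sub>R (T - S) + u *\<^sub>R (T + S)"
    and "T - s = (1 - (1 - u)) *\<^sub>R (T - S) + (1 - u) *\<^sub>R (T + S)"
    using \<open>S > 0\<close> by (simp_all add: u_def field_simps)
  then have "f (T + s) \<le> (1 - u) * f (T - S) + u * f (T + S)"
    and "f (T - s) \<le> u * f (T - S) + (1 - u) * f (T + S)"
    using convex_onD[OF f, of u] convex_onD[OF f, of "1 - u"] u I by simp_all
  then show ?thesis
    by (simp add: algebra_simps)
qed

lemma convex_on_plus_minus_compose: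
  fixes f :: "real \<Rightarrow> real" and T s :: "'a::real_vector \<Rightarrow> real"
  assumes f: "convex_on {0..} f" and T: "linear T" and s: "convex_on Q s"
    and s_nonneg: "\<And>x. x \<in> Q \<Longrightarrow> 0 \<le> s x" and s_le: "\<And>x. x \<in> Q \<Longrightarrow> s x \<le> T x"
  shows "convex_on Q (\<lambda>x. f (T x + s x) + f (T x - s x))"
proof (rule convex_onI)
  show Q: "convex Q"
    using s by (rule convex_on_imp_convex)
  fix t :: real and x y
  assume t: "0 < t" "t < 1" and xy: "x \<in> Q" "y \<in> Q"
  define z where "z = (1 - t) *\<^sub>R x + t *\<^sub>R y"
  define S where "S = (1 - t) * s x + t * s y"
  have "z \<in> Q"
    using Q xy t unfolding z_def convex_alt by simp
  have Tz: "T z = (1 - t) * T x + t * T y"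
    by (simp add: z_def linear_add[OF T] linear_scale[OF T])
  have "s z \<le> S"
    using convex_onD[OF s, of t x y] t xy by (simp add: z_def S_def)
  have "S \<le> T z"
    unfolding Tz S_def using s_le[OF xy(1)] s_le[OF xy(2)] t
    by (intro add_mono mult_left_mono) auto
  have "f (T z + s z) + f (T z - s z) \<le> f (T z + S) + f (T z - S)"
    using \<open>s z \<le> S\<close> \<open>S \<le> T z\<close> s_nonneg[OF \<open>z \<in> Q\<close>]
    by (intro convex_on_reflect_sum_mono[OF f]) auto
  also have "f (T z + S) \<le> (1 - t) * f (T x + s x) + t * f (T y + s y)"
    using convex_onD[OF f, of t "T x + s x" "T y + s y"] t s_le xy s_nonneg
    by (fastforce simp: Tz S_def algebra_simps)
  also have "f (T z - S) \<le> (1 - t) * f (T x - s x) + t * f (T y - s y)"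
    using convex_onD[OF f, of t "T x - s x" "T y - s y"] t s_le xy
    by (fastforce simp: Tz S_def algebra_simps)
  finally show "f (T z + s z) + f (T z - s z) \<le>
      (1 - t) * (f (T x + s x) + f (T x - s x)) + t * (f (T y + s y) + f (T y - s y))"
    by (simp add: algebra_simps)
qed

lemma convex_on_compose_linear:
  assumes f: "convex_on UNIV f" and l: "linear l" and S: "convex S"
  shows "convex_on S (\<lambda>x. f (l x))"
  using S convex_onD[OF f] by (intro convex_onI) (simp_all add: linear_add[OF l] linear_scale[OF l])

lemma convex_on_cong:
  assumes "S = T" and "\<And>x. x \<in> T \<Longrightarrow> f x = g x"
  shows "convex_on S f = convex_on T g"
  using assms unfolding convex_on_def convex_def by (smt (verit))

lemma mu_plus_minus_closed_form:
  assumes "0 \<le> s" "0 \<le> T" "G > 0" "T^2 + s^2 = 2 * G"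
  shows "mu_plus ((T^2 - s^2) / (2 * G)) = (T + s) / sqrt G"
    and "mu_minus ((T^2 - s^2) / (2 * G)) = (T - s) / sqrt G"
proof -
  have "G * T^2 + G * s^2 = G * (G * 2)"
    using assms(4) by (metis distrib_left mult.commute)
  then have "1 + (T^2 - s^2) / (2 * G) = (T / sqrt G)^2" "1 - (T^2 - s^2) / (2 * G) = (s / sqrt G)^2"
    using assms by (simp_all add: power_divide field_simps)
  then have "sqrt (1 + (T^2 - s^2) / (2 * G)) = T / sqrt G"
    and "sqrt (1 - (T^2 - s^2) / (2 * G)) = s / sqrt G"
    using assms by simp_all
  then show "mu_plus ((T^2 - s^2) / (2 * G)) = (T + s) / sqrt G"
    and "mu_minus ((T^2 - s^2) / (2 * G)) = (T - s) / sqrt G"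
    by (simp_all add: mu_plus_def mu_minus_def add_divide_distrib diff_divide_distrib)
qed

definition eigen_gap :: "real \<Rightarrow> real \<Rightarrow> real \<Rightarrow> real \<Rightarrow> real \<Rightarrow> real" where
  "eigen_gap aA aB aAB rA rB = sqrt ((aA * rA + aB * rB)^2 - 4 * (aA * aB - aAB^2) * rA * rB)"

lemma eigen_gap_radicand_eq_sum_squares:
  fixes aA aB aAB rA rB :: real
  assumes "aA > 0" "aAB^2 \<le> aA * aB"
  shows "(aA * rA + aB * rB)^2 - 4 * (aA * aB - aAB^2) * rA * rB
       = (aA * rA + (2 * aAB^2 - aA * aB) / aA * rB)^2 + (2 * aAB * sqrt (aA * aB - aAB^2) / aA * rB)^2"
proof -
  have "(sqrt (aA * aB - aAB^2))^2 = aA * aB - aAB^2"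
    using assms by simp
  then show ?thesis
    using assms by (simp add: power_mult_distrib power_divide field_simps)
      (simp add: power2_eq_square eval_nat_numeral algebra_simps)
qed

lemma eigen_gap_eq_norm:
  fixes aA aB aAB rA rB :: real
  assumes "aA > 0" "aAB^2 \<le> aA * aB"
  shows "eigen_gap aA aB aAB rA rB
       = norm (aA * rA + (2 * aAB^2 - aA * aB) / aA * rB, 2 * aAB * sqrt (aA * aB - aAB^2) / aA * rB)"
  using eigen_gap_radicand_eq_sum_squares[OF assms]
  by (simp only: eigen_gap_def norm_Pair real_norm_def power2_abs)

lemma eigen_gap_le:
  fixes aA aB aAB rA rB :: real
  assumes "0 \<le> aA" "0 \<le> aB" "aAB^2 \<le> aA * aB" "0 \<le> rA" "0 \<le> rB"
  shows "eigen_gap aA aB aAB rA rB \<le> aA * rA + aB * rB"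
proof -
  have "(aA * rA + aB * rB)^2 - 4 * (aA * aB - aAB^2) * rA * rB \<le> (aA * rA + aB * rB)^2"
    using assms by (simp add: mult_nonneg_nonneg)
  then have "eigen_gap aA aB aAB rA rB \<le> sqrt ((aA * rA + aB * rB)^2)"
    unfolding eigen_gap_def by (rule real_sqrt_le_mono)
  then show ?thesis
    using assms by simp
qed

lemma Gf_powr_If_eq:
  fixes aA aB aAB rA rB :: real
  assumes a: "aA > 0" "aB > 0" "aAB^2 \<le> aA * aB" and r: "rA > 0" "rB > 0"
  defines "T \<equiv> aA * rA + aB * rB" and "s \<equiv> eigen_gap aA aB aAB rA rB"
  shows "Gf aA aB aAB rA rB powr (5/4) * If aA aB aAB rA rB
       = (8 * pi) powr (5/2) * (2 * sqrt 2 / (15 * pi^2)) * ((T + s) powr (5/2) + (T - s) powr (5/2))"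
proof -
  define G where "G = Gf aA aB aAB rA rB"
  have "G > 0"
    unfolding G_def Gf_def using a r by (intro add_pos_pos add_pos_nonneg) simp_all
  have s_sq: "s^2 = T^2 - 4 * (aA * aB - aAB^2) * rA * rB"
    using eigen_gap_radicand_eq_sum_squares[OF a(1,3), of rA rB]
    by (simp add: s_def T_def eigen_gap_def)
  have s: "0 \<le> s" "s \<le> T"
    using eigen_gap_le[of aA aB aAB rA rB] a r by (simp_all add: s_def T_def eigen_gap_eq_norm)
  then have "0 \<le> T"
    by linarith
  have G_sum: "T^2 + s^2 = 2 * G"
    unfolding s_sq by (simp add: G_def Gf_def T_def power2_eq_square algebra_simps)
  have xi: "xiAB aA aB aAB rA rB = (T^2 - s^2) / (2 * G)"
  proof -
    have "(T^2 - s^2) / (2 * G) = 2 * rA * rB * (aA * aB - aAB^2) / G"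
      using \<open>G > 0\<close> by (simp add: s_sq field_simps)
    then show ?thesis
      by (simp add: xiAB_def G_def Gf_def)
  qed
  have scale: "G powr (5/4) * (x / sqrt G) powr (5/2) = x powr (5/2)" if "0 \<le> x" for x
  proof -
    have "sqrt G powr (5/2) = G powr (5/4)"
      using \<open>G > 0\<close> by (simp add: powr_half_sqrt[symmetric] powr_powr)
    then show ?thesis
      using that \<open>G > 0\<close> by (simp add: powr_divide)
  qed
  show ?thesis
    using scale[of "T + s"] scale[of "T - s"] s
    by (simp add: If_def Let_def xi mu_plus_minus_closed_form[OF s(1) \<open>0 \<le> T\<close> \<open>G > 0\<close> G_sum]
        flip: G_def) (simp add: algebra_simps)
qed

lemma convex_open_quadrant: "convex {(x, y). (0::real) < x \<and> (0::real) < y}"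
proof -
  have quadrant: "{(x, y). (0::real) < x \<and> (0::real) < y} = {0<..} \<times> {0<..}"
    by auto
  show ?thesis
    unfolding quadrant by (intro convex_Times convex_real_interval)
qed

lemma convex_on_Gf_powr_If:
  fixes aA aB aAB :: real
  assumes a: "aA > 0" "aB > 0" "aAB^2 \<le> aA * aB"
  shows "convex_on {(rA, rB). 0 < rA \<and> 0 < rB}
           (\<lambda>(rA, rB). Gf aA aB aAB rA rB powr (5/4) * If aA aB aAB rA rB)"
proof -
  let ?Q = "{(rA, rB). (0::real) < rA \<and> (0::real) < rB}"
  define T where "T = (\<lambda>r::real \<times> real. aA * fst r + aB * snd r)"
  define s where "s = (\<lambda>r::real \<times> real. eigen_gap aA aB aAB (fst r) (snd r))"
  define c where "c = (2 * aAB^2 - aA * aB) / aA"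
  define e where "e = 2 * aAB * sqrt (aA * aB - aAB^2) / aA"
  define l where "l = (\<lambda>r::real \<times> real. (aA * fst r + c * snd r, e * snd r))"
  have "linear T" "linear l"
    by (simp_all add: T_def l_def linear_iff algebra_simps)
  have "convex_on ?Q (\<lambda>r. norm (l r))"
    using convex_on_compose_linear[OF convex_on_dist[OF convex_UNIV, of 0] \<open>linear l\<close> convex_open_quadrant]
    by (simp add: dist_0_norm)
  then have "convex_on ?Q s"
    by (simp add: s_def l_def c_def e_def eigen_gap_eq_norm[OF a(1,3)])
  moreover have "0 \<le> s r" for r
    by (simp add: s_def eigen_gap_eq_norm[OF a(1,3)])
  moreover have "s r \<le> T r" if "r \<in> ?Q" for r
    using that a by (cases r) (simp add: s_def T_def eigen_gap_le)
  ultimately have "convex_on ?Q (\<lambda>r. (T r + s r) powr (5/2) + (T r - s r) powr (5/2))"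
    by (intro convex_on_plus_minus_compose[OF convex_on_powr_nonneg \<open>linear T\<close>]) auto
  then have scaled: "convex_on ?Q (\<lambda>r. (8 * pi) powr (5/2) * (2 * sqrt 2 / (15 * pi^2))
                              * ((T r + s r) powr (5/2) + (T r - s r) powr (5/2)))"
    by (intro convex_on_cmul) auto
  have "convex_on ?Q (\<lambda>(rA, rB). Gf aA aB aAB rA rB powr (5/4) * If aA aB aAB rA rB)
      = convex_on ?Q (\<lambda>r. (8 * pi) powr (5/2) * (2 * sqrt 2 / (15 * pi^2))
                              * ((T r + s r) powr (5/2) + (T r - s r) powr (5/2)))"
    by (rule convex_on_cong) (auto simp: Gf_powr_If_eq[OF a] T_def s_def)
  then show ?thesis
    using scaled by (rule iffD2)
qed

lemma convex_truncated_quadrant: "convex {(x, y). (0::real) < x \<and> (0::real) < y \<and> x + y \<le> M}"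
proof -
  have "{(x, y). (0::real) < x \<and> (0::real) < y \<and> x + y \<le> M}
      = {(x, y). 0 < x \<and> 0 < y} \<inter> {r. inner (1, 1) r \<le> M}"
    by (auto simp: inner_prod_def)
  then show ?thesis
    by (simp only: convex_Int convex_open_quadrant convex_halfspace_le)
qed

lemma convex_on_Ff:
  fixes aA aB aAB \<rho> L \<mu>A \<mu>B :: real
  assumes a: "aA > 0" "aB > 0" "aAB^2 \<le> aA * aB" and "L > 0"
  shows "convex_on {(rA, rB). 0 < rA \<and> 0 < rB} (\<lambda>(rA, rB). Ff aA aB aAB \<rho> L \<mu>A \<mu>B rA rB)"
proof -
  let ?Q = "{(rA, rB). (0::real) < rA \<and> (0::real) < rB}"
  define c where "c = 8 * pi * abar aA aB aAB / L * (\<rho> * abar aA aB aAB ^ 3) powr (1/4)"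
  define W where "W = (\<lambda>(rA, rB). Gf aA aB aAB rA rB powr (5/4) * If aA aB aAB rA rB)"
  have "c \<ge> 0"
    using a \<open>L > 0\<close> by (simp add: c_def abar_def)
  have squares: "convex_on ?Q (\<lambda>r. (fst r)^2 + (snd r)^2)"
    using convex_on_compose_linear[OF convex_power2 linear_fst convex_open_quadrant]
      convex_on_compose_linear[OF convex_power2 linear_snd convex_open_quadrant]
    by (rule convex_on_add)
  have linear_part: "convex_on ?Q (\<lambda>r. - \<mu>A * fst r - \<mu>B * snd r)"
    using convex_on_compose_linear[of "\<lambda>x. x" "\<lambda>r. - \<mu>A * fst r - \<mu>B * snd r", OF _ _ convex_open_quadrant]
    by (simp add: convex_on_ident linear_iff algebra_simps)
  have "convex_on ?Q (\<lambda>r. c * ((fst r)^2 + (snd r)^2) + L powr (-3/2) * W r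
                            + (- \<mu>A * fst r - \<mu>B * snd r))" (is "convex_on ?Q ?sum")
    unfolding W_def
    by (intro convex_on_add[OF convex_on_add] convex_on_cmul squares linear_part
        \<open>c \<ge> 0\<close> convex_on_Gf_powr_If[OF a]) simp
  moreover have "convex_on ?Q ?sum = convex_on ?Q (\<lambda>(rA, rB). Ff aA aB aAB \<rho> L \<mu>A \<mu>B rA rB)"
    by (rule convex_on_cong) (auto simp: Ff_def W_def c_def algebra_simps)
  ultimately show ?thesis
    by blast
qed

theorem lemmaF1:
  fixes aA aB aAB C \<nu> :: real
  assumes "aA > 0" and "aB > 0" and "aAB > 0" and "aAB^2 \<le> aA * aB"
    and "C > 0" and "0 < \<nu>" and "\<nu> \<le> 1/10000"
  shows "\<exists>\<delta>>0. \<forall>\<rho> L \<mu>A \<mu>B. \<rho> > 0 \<longrightarrow> L > 0 \<longrightarrow>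
           \<rho> * abar aA aB aAB ^ 3 < \<delta> \<longrightarrow>
           convex_on {(rA, rB). rA > 0 \<and> rB > 0 \<and> rA + rB \<le> C * Kz \<nu> \<rho> aA aB aAB * \<rho> * L}
             (\<lambda>(rA, rB). Ff aA aB aAB \<rho> L \<mu>A \<mu>B rA rB)"
proof (intro exI[of _ 1] conjI allI impI)
  fix \<rho> L \<mu>A \<mu>B :: real
  assume "L > 0"
  have domain: "{(rA, rB). rA > 0 \<and> rB > 0 \<and> rA + rB \<le> C * Kz \<nu> \<rho> aA aB aAB * \<rho> * L}
      \<subseteq> {(rA, rB). 0 < rA \<and> 0 < rB}"
    by auto
  show "convex_on {(rA, rB). rA > 0 \<and> rB > 0 \<and> rA + rB \<le> C * Kz \<nu> \<rho> aA aB aAB * \<rho> * L}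
      (\<lambda>(rA, rB). Ff aA aB aAB \<rho> L \<mu>A \<mu>B rA rB)"
    using convex_on_Ff[OF assms(1,2,4) \<open>L > 0\<close>] domain convex_truncated_quadrant
    by (rule convex_on_subset)
qed simp

end
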